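(* The element $\Delta(\Lambda)$ lies in $\mathcal{I}_L\otimes\mathcal{I}_R$ and belongs to the cotensor product of $\mathcal{I}_L$ and $\mathcal{I}_R$: $(1\otimes\tau_R)(\Delta(\Lambda))=(\tau_L\otimes1)(\Delta(\Lambda))$ in $U_q(\mathfrak{sl}_2)^{\otimes3}$.
   Context: Let $\mathbb{K}$ be a field and $q\in\mathbb{K}$ not a root of unity. $U_q(\mathfrak{sl}_2)$ is the associative $\mathbb{K}$-algebra with generators $E,F,K,K^{-1}$ and relations $KK^{-1}=K^{-1}K=1$, $KE=q^2EK$, $KF=q^{-2}FK$, $EF-FE=\frac{K-K^{-1}}{q-q^{-1}}$, with Casimir element $\Lambda=(q-q^{-1})^2EF+q^{-1}K+qK^{-1}$ and coproduct $\Delta(E)=E\otimes1+K\otimes E$, $\Delta(F)=F\otimes K^{-1}+1\otimes F$, $\Delta(K^{\pm1})=K^{\pm1}\otimes K^{\pm1}$. $\mathcal{I}_R$ is the subalgebra generated by $EK^{-1},F,K^{-1},\Lambda$, with algebra morphism $\tau_R:\mathcal{I}_R\to U_q(\mathfrak{sl}_2)\otimes\mathcal{I}_R$: $\tau_R(EK^{-1})=K^{-1}\otimes EK^{-1}$, $\tau_R(F)=K\otimes F-q^{-3}(q-q^{-1})^2F^2K\otimes EK^{-1}+q^{-1}(q+q^{-1})FK\otimes K^{-1}-q^{-1}FK\otimes\Lambda$, $\tau_R(K^{-1})=1\otimes K^{-1}-q^{-1}(q-q^{-1})^2F\otimes EK^{-1}$, $\tau_R(\Lambda)=1\otimes\Lambda$.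 $\mathcal{I}_L$ is the subalgebra generated by $E,FK,K,\Lambda$, with algebra morphism $\tau_L:\mathcal{I}_L\to\mathcal{I}_L\otimes U_q(\mathfrak{sl}_2)$: $\tau_L(E)=E\otimes K$, $\tau_L(FK)=FK\otimes K^{-1}-q^{-1}(q-q^{-1})^2E\otimes F^2K+q(q+q^{-1})K\otimes F-q\Lambda\otimes F$, $\tau_L(K)=K\otimes1-q^{-1}(q-q^{-1})^2E\otimes FK$, $\tau_L(\Lambda)=\Lambda\otimes1$. *)

theory Defs
  imports Main
begin

text \<open>An element of the free associative algebra over a commutative ring 'k on an
alphabet 'a is a finitely supported coefficient function on words.\<close>

type_synonym ('a, 'k) ncpoly = "'a list \<Rightarrow> 'k"

definition ncfin :: "('a, 'k::zero) ncpoly \<Rightarrow> bool" where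
  "ncfin p \<longleftrightarrow> finite {w. p w \<noteq> 0}"

definition ncconst :: "'k::zero \<Rightarrow> ('a, 'k) ncpoly" where
  "ncconst c = (\<lambda>v. if v = [] then c else 0)"

definition ncvar :: "'a \<Rightarrow> ('a, 'k::{zero,one}) ncpoly" where
  "ncvar x = (\<lambda>v. if v = [x] then 1 else 0)"

definition ncadd :: "('a, 'k::plus) ncpoly \<Rightarrow> ('a, 'k) ncpoly \<Rightarrow> ('a, 'k) ncpoly" where
  "ncadd p r = (\<lambda>w. p w + r w)"

definition ncdiff :: "('a, 'k::minus) ncpoly \<Rightarrow> ('a, 'k) ncpoly \<Rightarrow> ('a, 'k) ncpoly" where
  "ncdiff p r = (\<lambda>w. p w - r w)"

definition ncscale :: "'k::times \<Rightarrow> ('a, 'k) ncpoly \<Rightarrow> ('a, 'k) ncpoly" where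
  "ncscale c p = (\<lambda>w. c * p w)"

definition ncmul :: "('a, 'k::comm_semiring_1) ncpoly \<Rightarrow> ('a, 'k) ncpoly \<Rightarrow> ('a, 'k) ncpoly" where
  "ncmul p r = (\<lambda>w. \<Sum>i\<le>length w. p (take i w) * r (drop i w))"

definition ncsum :: "('a, 'k::comm_semiring_1) ncpoly list \<Rightarrow> ('a, 'k) ncpoly" where
  "ncsum ps = foldr ncadd ps (ncconst 0)"

primrec ncprod :: "('a \<Rightarrow> ('b, 'k::comm_semiring_1) ncpoly) \<Rightarrow> 'a list \<Rightarrow> ('b, 'k) ncpoly" where
  "ncprod f [] = ncconst 1"
| "ncprod f (x # w) = ncmul (f x) (ncprod f w)"

definition ncsubst :: "('a \<Rightarrow> ('b, 'k::comm_semiring_1) ncpoly) \<Rightarrow> ('a, 'k) ncpoly \<Rightarrow> ('b, 'k) ncpoly" where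
  "ncsubst f p = (\<lambda>v. \<Sum>w\<in>{w. p w \<noteq> 0}. p w * ncprod f w v)"

inductive_set nc_ideal :: "('a, 'k::comm_ring_1) ncpoly set \<Rightarrow> ('a, 'k) ncpoly set"
  for R where
  gen: "r \<in> R \<Longrightarrow> r \<in> nc_ideal R"
| zero: "ncconst 0 \<in> nc_ideal R"
| add: "x \<in> nc_ideal R \<Longrightarrow> y \<in> nc_ideal R \<Longrightarrow> ncadd x y \<in> nc_ideal R"
| mult: "x \<in> nc_ideal R \<Longrightarrow> ncfin a \<Longrightarrow> ncfin b \<Longrightarrow> ncmul (ncmul a x) b \<in> nc_ideal R"

datatype gen = GE | GF | GK | GKi

abbreviation "uE \<equiv> ncvar GE"
abbreviation "uF \<equiv> ncvar GF"
abbreviation "uK \<equiv> ncvar GK"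
abbreviation "uKi \<equiv> ncvar GKi"

definition rel_U :: "'k::field \<Rightarrow> (gen, 'k) ncpoly set" where
  "rel_U q = {
     ncdiff (ncmul uK uKi) (ncconst 1),
     ncdiff (ncmul uKi uK) (ncconst 1),
     ncdiff (ncmul uK uE) (ncscale (q^2) (ncmul uE uK)),
     ncdiff (ncmul uK uF) (ncscale (inverse q ^ 2) (ncmul uF uK)),
     ncdiff (ncdiff (ncmul uE uF) (ncmul uF uE))
            (ncscale (inverse (q - inverse q)) (ncdiff uK uKi)) }"

text \<open>Placing a U-element into tensor slot i (letters of the tensor power are
pairs (generator, slot)).\<close>
definition slot :: "nat \<Rightarrow> (gen, 'k::comm_semiring_1) ncpoly \<Rightarrow> (gen \<times> nat, 'k) ncpoly" where
  "slot i p = ncsubst (\<lambda>x. ncvar (x, i)) p"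

definition shift :: "nat \<Rightarrow> (gen \<times> nat, 'k::comm_semiring_1) ncpoly \<Rightarrow> (gen \<times> nat, 'k) ncpoly" where
  "shift k P = ncsubst (\<lambda>(x, i). ncvar (x, i + k)) P"

definition rel_T :: "nat \<Rightarrow> 'k::field \<Rightarrow> (gen \<times> nat, 'k) ncpoly set" where
  "rel_T n q = {slot i r | i r. i < n \<and> r \<in> rel_U q}
      \<union> {ncdiff (ncmul (ncvar (x, i)) (ncvar (y, j))) (ncmul (ncvar (y, j)) (ncvar (x, i)))
          | x y i j. i < n \<and> j < n \<and> i \<noteq> j}"

definition eqT :: "nat \<Rightarrow> 'k::field \<Rightarrow> (gen \<times> nat, 'k) ncpoly \<Rightarrow> (gen \<times> nat, 'k) ncpoly \<Rightarrow> bool" where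
  "eqT n q P Q \<longleftrightarrow> ncdiff P Q \<in> nc_ideal (rel_T n q)"

text \<open>a \<otimes> b in U \<otimes> U; a \<otimes> X and X \<otimes> b in U^{\<otimes>3} for X in U \<otimes> U.\<close>
definition tens2 :: "(gen, 'k::comm_semiring_1) ncpoly \<Rightarrow> (gen, 'k) ncpoly \<Rightarrow> (gen \<times> nat, 'k) ncpoly" where
  "tens2 a b = ncmul (slot 0 a) (slot 1 b)"

definition tens_1_2 :: "(gen, 'k::comm_semiring_1) ncpoly \<Rightarrow> (gen \<times> nat, 'k) ncpoly \<Rightarrow> (gen \<times> nat, 'k) ncpoly" where
  "tens_1_2 a X = ncmul (slot 0 a) (shift 1 X)"

definition tens_2_1 :: "(gen \<times> nat, 'k::comm_semiring_1) ncpoly \<Rightarrow> (gen, 'k) ncpoly \<Rightarrow> (gen \<times> nat, 'k) ncpoly" where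
  "tens_2_1 X b = ncmul X (slot 2 b)"

definition Casimir :: "'k::field \<Rightarrow> (gen, 'k) ncpoly" where
  "Casimir q = ncadd (ncadd (ncscale ((q - inverse q)^2) (ncmul uE uF))
                            (ncscale (inverse q) uK)) (ncscale q uKi)"

definition Delta_gen :: "gen \<Rightarrow> (gen \<times> nat, 'k::comm_semiring_1) ncpoly" where
  "Delta_gen x = (case x of
      GE \<Rightarrow> ncadd (tens2 uE (ncconst 1)) (tens2 uK uE)
    | GF \<Rightarrow> ncadd (tens2 uF uKi) (tens2 (ncconst 1) uF)
    | GK \<Rightarrow> tens2 uK uK
    | GKi \<Rightarrow> tens2 uKi uKi)"

definition Delta :: "(gen, 'k::comm_semiring_1) ncpoly \<Rightarrow> (gen \<times> nat, 'k) ncpoly" where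
  "Delta p = ncsubst Delta_gen p"

text \<open>Elements of I_R (resp. I_L) are presented as noncommutative polynomials in
abstract letters standing for the generators EK^{-1}, F, K^{-1}, Lambda
(resp. E, FK, K, Lambda); evalR/evalL evaluate them in U and tauR/tauL apply the
algebra morphisms determined by the given images of the generators.\<close>

datatype genR = RE | RF | RKi | RL
datatype genL = LE | LF | LK | LL

definition genR_val :: "'k::field \<Rightarrow> genR \<Rightarrow> (gen, 'k) ncpoly" where
  "genR_val q x = (case x of
      RE \<Rightarrow> ncmul uE uKi | RF \<Rightarrow> uF | RKi \<Rightarrow> uKi | RL \<Rightarrow> Casimir q)"

definition genL_val :: "'k::field \<Rightarrow> genL \<Rightarrow> (gen, 'k) ncpoly" where
  "genL_val q x = (case x of
      LE \<Rightarrow> uE | LF \<Rightarrow> ncmul uF uK | LK \<Rightarrow> uK | LL \<Rightarrow> Casimir q)"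

definition evalR :: "'k::field \<Rightarrow> (genR, 'k) ncpoly \<Rightarrow> (gen, 'k) ncpoly" where
  "evalR q p = ncsubst (genR_val q) p"

definition evalL :: "'k::field \<Rightarrow> (genL, 'k) ncpoly \<Rightarrow> (gen, 'k) ncpoly" where
  "evalL q p = ncsubst (genL_val q) p"

definition tauR_gen :: "'k::field \<Rightarrow> genR \<Rightarrow> (gen \<times> nat, 'k) ncpoly" where
  "tauR_gen q x = (case x of
      RE \<Rightarrow> tens2 uKi (ncmul uE uKi)
    | RF \<Rightarrow> ncsum [ tens2 uK uF,
                   ncscale (- (inverse q ^ 3 * (q - inverse q)^2))
                           (tens2 (ncmul (ncmul uF uF) uK) (ncmul uE uKi)),
                   ncscale (inverse q * (q + inverse q)) (tens2 (ncmul uF uK) uKi),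
                   ncscale (- inverse q) (tens2 (ncmul uF uK) (Casimir q)) ]
    | RKi \<Rightarrow> ncadd (tens2 (ncconst 1) uKi)
                  (ncscale (- (inverse q * (q - inverse q)^2)) (tens2 uF (ncmul uE uKi)))
    | RL \<Rightarrow> tens2 (ncconst 1) (Casimir q))"

definition tauL_gen :: "'k::field \<Rightarrow> genL \<Rightarrow> (gen \<times> nat, 'k) ncpoly" where
  "tauL_gen q x = (case x of
      LE \<Rightarrow> tens2 uE uK
    | LF \<Rightarrow> ncsum [ tens2 (ncmul uF uK) uKi,
                   ncscale (- (inverse q * (q - inverse q)^2))
                           (tens2 uE (ncmul (ncmul uF uF) uK)),
                   ncscale (q * (q + inverse q)) (tens2 uK uF),
                   ncscale (- q) (tens2 (Casimir q) uF) ]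
    | LK \<Rightarrow> ncadd (tens2 uK (ncconst 1))
                 (ncscale (- (inverse q * (q - inverse q)^2)) (tens2 uE (ncmul uF uK)))
    | LL \<Rightarrow> tens2 (Casimir q) (ncconst 1))"

definition tauR :: "'k::field \<Rightarrow> (genR, 'k) ncpoly \<Rightarrow> (gen \<times> nat, 'k) ncpoly" where
  "tauR q p = ncsubst (tauR_gen q) p"

definition tauL :: "'k::field \<Rightarrow> (genL, 'k) ncpoly \<Rightarrow> (gen \<times> nat, 'k) ncpoly" where
  "tauL q p = ncsubst (tauL_gen q) p"

end

theory Submission
  imports Defs
begin

text \<open>Writing \<open>\<kappa> = q - q\<inverse>\<close>, the coproduct of the Casimir element decomposes as
  \<open>\<Delta>(\<Lambda>) = \<Lambda> \<otimes> K\<inverse> + K \<otimes> \<Lambda> - (q + q\<inverse>) K \<otimes> K\<inverse> + \<kappa>\<^sup>2 E \<otimes> F + q\<^sup>-\<^sup>2 \<kappa>\<^sup>2 FK \<otimes> EK\<inverse>\<close>,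
  a sum of tensors of generators of I_L and I_R.  Expanding \<open>\<Delta>(E) \<Delta>(F)\<close> in the free
  algebra, this identity needs only two relations of U \<otimes> U: the term \<open>(K \<otimes> E)(F \<otimes> K\<inverse>)\<close>
  must be reordered to \<open>KF \<otimes> EK\<inverse>\<close>, and then \<open>KF = q\<^sup>-\<^sup>2 FK\<close> is used.  Applying
  \<open>1 \<otimes> \<tau>\<^sub>R\<close> and \<open>\<tau>\<^sub>L \<otimes> 1\<close> to this decomposition and expanding, the two sides of the
  cotensor identity agree already as linear combinations of words, so no relation of
  U \<otimes> U \<otimes> U is needed.\<close>

definition ncmonom :: "'a list \<Rightarrow> ('a, 'k::{zero,one}) ncpoly" where
  "ncmonom w = (\<lambda>v. if v = w then 1 else 0)"

lemma ncvar_eq_ncmonom: "ncvar x = ncmonom [x]"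
  by (simp add: ncvar_def ncmonom_def)

lemma ncconst_eq_ncscale_ncmonom: "ncconst c = ncscale (c::'k::comm_semiring_1) (ncmonom [])"
  by (auto simp: ncconst_def ncscale_def ncmonom_def)

lemma ncmul_ncmonom:
  "ncmul (ncmonom u) (ncmonom v) = (ncmonom (u @ v) :: ('a, 'k::comm_semiring_1) ncpoly)"
proof
  fix w :: "'a list"
  have split_iff: "take i w = u \<and> drop i w = v \<longleftrightarrow> i = length u \<and> w = u @ v"
    if "i \<le> length w" for i
    using that by (metis append_eq_conv_conj length_take min_absorb2)
  have "ncmul (ncmonom u) (ncmonom v) w
      = (\<Sum>i\<le>length w. if i = length u \<and> w = u @ v then 1 else (0::'k))"
    unfolding ncmul_def ncmonom_def by (intro sum.cong) (auto simp: split_iff[symmetric])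
  also have "\<dots> = ncmonom (u @ v) w"
    by (cases "w = u @ v") (auto simp: ncmonom_def)
  finally show "ncmul (ncmonom u) (ncmonom v) w = (ncmonom (u @ v) :: ('a, 'k) ncpoly) w" .
qed

lemma ncfin_ncmonom: "ncfin (ncmonom w :: ('a, 'k::{zero,one}) ncpoly)"
  unfolding ncfin_def ncmonom_def by (rule finite_subset[of _ "{w}"]) auto

lemma ncfin_ncvar: "ncfin (ncvar x :: ('a, 'k::{zero,one}) ncpoly)"
  by (simp add: ncvar_eq_ncmonom ncfin_ncmonom)

lemma ncfin_ncadd: "ncfin p \<Longrightarrow> ncfin r \<Longrightarrow> ncfin (ncadd p (r::('a, 'k::monoid_add) ncpoly))"
  unfolding ncfin_def ncadd_def
  by (rule finite_subset[of _ "{w. p w \<noteq> 0} \<union> {w. r w \<noteq> 0}"]) auto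

lemma ncfin_ncdiff: "ncfin p \<Longrightarrow> ncfin r \<Longrightarrow> ncfin (ncdiff p (r::('a, 'k::group_add) ncpoly))"
  unfolding ncfin_def ncdiff_def
  by (rule finite_subset[of _ "{w. p w \<noteq> 0} \<union> {w. r w \<noteq> 0}"]) auto

lemma ncfin_ncscale: "ncfin p \<Longrightarrow> ncfin (ncscale c (p::('a, 'k::mult_zero) ncpoly))"
  unfolding ncfin_def ncscale_def by (rule finite_subset[of _ "{w. p w \<noteq> 0}"]) auto

lemma ncfin_ncconst: "ncfin (ncconst c :: ('a, 'k::comm_semiring_1) ncpoly)"
  by (simp add: ncconst_eq_ncscale_ncmonom ncfin_ncmonom ncfin_ncscale)

lemma ncfin_ncmul:
  assumes "ncfin p" "ncfin r"
  shows "ncfin (ncmul p (r::('a, 'k::comm_semiring_1) ncpoly))"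
  unfolding ncfin_def
proof (rule finite_subset)
  show "finite ((\<lambda>(a, b). a @ b) ` ({w. p w \<noteq> 0} \<times> {w. r w \<noteq> 0}))"
    using assms by (simp add: ncfin_def)
  show "{w. ncmul p r w \<noteq> 0} \<subseteq> (\<lambda>(a, b). a @ b) ` ({w. p w \<noteq> 0} \<times> {w. r w \<noteq> 0})"
  proof
    fix w assume "w \<in> {w. ncmul p r w \<noteq> 0}"
    then obtain i where "p (take i w) * r (drop i w) \<noteq> 0"
      unfolding ncmul_def by (meson mem_Collect_eq sum.not_neutral_contains_not_neutral)
    then show "w \<in> (\<lambda>(a, b). a @ b) ` ({w. p w \<noteq> 0} \<times> {w. r w \<noteq> 0})"
      by (intro image_eqI[of _ _ "(take i w, drop i w)"]) auto
  qed
qed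

lemma ncsubst_eq_sum_superset:
  assumes "finite S" "{w. p w \<noteq> 0} \<subseteq> S"
  shows "ncsubst f p = (\<lambda>v. \<Sum>w\<in>S. p w * ncprod f w v)"
  unfolding ncsubst_def by (intro ext sum.mono_neutral_left) (use assms in auto)

lemma ncsubst_ncadd:
  fixes p r :: "('a, 'k::comm_semiring_1) ncpoly"
  assumes "ncfin p" "ncfin r"
  shows "ncsubst f (ncadd p r) = ncadd (ncsubst f p) (ncsubst f r)"
proof -
  let ?S = "{w. p w \<noteq> 0} \<union> {w. r w \<noteq> 0}"
  have "finite ?S" using assms by (simp add: ncfin_def)
  then show ?thesis
    by (subst (1 2 3) ncsubst_eq_sum_superset[where S = ?S])
       (auto simp: ncadd_def distrib_right sum.distrib)
qed

lemma ncsubst_ncdiff: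
  fixes p r :: "('a, 'k::comm_ring_1) ncpoly"
  assumes "ncfin p" "ncfin r"
  shows "ncsubst f (ncdiff p r) = ncdiff (ncsubst f p) (ncsubst f r)"
proof -
  let ?S = "{w. p w \<noteq> 0} \<union> {w. r w \<noteq> 0}"
  have "finite ?S" using assms by (simp add: ncfin_def)
  then show ?thesis
    by (subst (1 2 3) ncsubst_eq_sum_superset[where S = ?S])
       (auto simp: ncdiff_def left_diff_distrib sum_subtractf)
qed

lemma ncsubst_ncscale:
  fixes p :: "('a, 'k::comm_semiring_1) ncpoly"
  assumes "ncfin p"
  shows "ncsubst f (ncscale c p) = ncscale c (ncsubst f p)"
proof -
  let ?S = "{w. p w \<noteq> 0}"
  have "finite ?S" using assms by (simp add: ncfin_def)
  then show ?thesis
    by (subst (1 2) ncsubst_eq_sum_superset[where S = ?S])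
       (auto simp: ncscale_def sum_distrib_left mult.assoc)
qed

lemma ncsubst_ncmonom: "ncsubst f (ncmonom w :: ('a, 'k::comm_semiring_1) ncpoly) = ncprod f w"
  by (subst ncsubst_eq_sum_superset[where S = "{w}"]) (auto simp: ncmonom_def)

lemma ncmul_ncadd_left: "ncmul (ncadd p r) s = ncadd (ncmul p s) (ncmul r (s::('a, 'k::comm_semiring_1) ncpoly))"
  by (auto simp: ncmul_def ncadd_def distrib_right sum.distrib)

lemma ncmul_ncadd_right: "ncmul s (ncadd p r) = ncadd (ncmul s p) (ncmul s (r::('a, 'k::comm_semiring_1) ncpoly))"
  by (auto simp: ncmul_def ncadd_def distrib_left sum.distrib)

lemma ncmul_ncdiff_left: "ncmul (ncdiff p r) s = ncdiff (ncmul p s) (ncmul r (s::('a, 'k::comm_ring_1) ncpoly))"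
  by (auto simp: ncmul_def ncdiff_def left_diff_distrib sum_subtractf)

lemma ncmul_ncdiff_right: "ncmul s (ncdiff p r) = ncdiff (ncmul s p) (ncmul s (r::('a, 'k::comm_ring_1) ncpoly))"
  by (auto simp: ncmul_def ncdiff_def right_diff_distrib sum_subtractf)

lemma ncmul_ncscale_left: "ncmul (ncscale c p) s = ncscale c (ncmul p (s::('a, 'k::comm_semiring_1) ncpoly))"
  by (auto simp: ncmul_def ncscale_def sum_distrib_left mult.assoc)

lemma ncmul_ncscale_right: "ncmul s (ncscale c p) = ncscale c (ncmul s (p::('a, 'k::comm_semiring_1) ncpoly))"
  by (auto simp: ncmul_def ncscale_def sum_distrib_left mult.left_commute)

lemma ncscale_ncscale: "ncscale a (ncscale b p) = ncscale (a * b) (p::('a, 'k::semigroup_mult) ncpoly)"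
  by (simp add: ncscale_def mult.assoc)

lemma ncscale_one: "ncscale 1 p = (p::('a, 'k::monoid_mult) ncpoly)"
  by (simp add: ncscale_def)

lemma ncdiff_self: "ncdiff p p = (ncconst 0 :: ('a, 'k::group_add) ncpoly)"
  by (auto simp: ncdiff_def ncconst_def)

lemmas ncpoly_normalize =
  ncvar_eq_ncmonom ncconst_eq_ncscale_ncmonom ncmul_ncmonom
  ncfin_ncmonom ncfin_ncvar ncfin_ncadd ncfin_ncdiff ncfin_ncscale ncfin_ncconst ncfin_ncmul
  ncsubst_ncadd ncsubst_ncdiff ncsubst_ncscale ncsubst_ncmonom
  ncmul_ncadd_left ncmul_ncadd_right ncmul_ncdiff_left ncmul_ncdiff_right
  ncmul_ncscale_left ncmul_ncscale_right ncscale_ncscale ncscale_one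

lemmas Uq_sl2_defs =
  ncsum_def tens2_def tens_1_2_def tens_2_1_def slot_def shift_def Casimir_def
  Delta_def Delta_gen_def evalR_def evalL_def genR_val_def genL_val_def
  tauR_def tauL_def tauR_gen_def tauL_gen_def

lemma eqT_refl: "eqT n q P P"
  unfolding eqT_def ncdiff_self by (rule nc_ideal.zero)

lemma slot_commutator_in_rel_T:
  assumes "i < n" "j < n" "i \<noteq> j"
  shows "ncdiff (ncmul (ncvar (x, i)) (ncvar (y, j))) (ncmul (ncvar (y, j)) (ncvar (x, i)))
           \<in> rel_T n q"
  using assms unfolding rel_T_def by blast

lemma slot_in_rel_T: "i < n \<Longrightarrow> r \<in> rel_U q \<Longrightarrow> slot i r \<in> rel_T n q"
  unfolding rel_T_def by blast

lemma K_F_relation_in_rel_U: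
  "ncdiff (ncmul uK uF) (ncscale (inverse q ^ 2) (ncmul uF uK)) \<in> rel_U q"
  by (simp add: rel_U_def)

definition casimir_split :: "'k::field \<Rightarrow> ((genL, 'k) ncpoly \<times> (genR, 'k) ncpoly) list" where
  "casimir_split q =
     [(ncvar LL, ncvar RKi),
      (ncvar LK, ncvar RL),
      (ncscale (- (q + inverse q)) (ncvar LK), ncvar RKi),
      (ncscale ((q - inverse q)^2) (ncvar LE), ncvar RF),
      (ncscale ((q - inverse q)^2 * inverse q ^ 2) (ncvar LF), ncvar RE)]"

lemma ncfin_casimir_split: "\<forall>(\<alpha>, \<beta>) \<in> set (casimir_split q). ncfin \<alpha> \<and> ncfin \<beta>"
  by (simp add: casimir_split_def ncfin_ncvar ncfin_ncscale)

lemma Delta_Casimir_minus_casimir_split: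
  fixes q :: "'k::field"
  shows "ncdiff (Delta (Casimir q))
            (ncsum (map (\<lambda>(\<alpha>, \<beta>). tens2 (evalL q \<alpha>) (evalR q \<beta>)) (casimir_split q)))
     = ncadd
         (ncmul (ncmul (ncscale ((q - inverse q)^2) (ncvar (GK, 0)))
            (ncdiff (ncmul (ncvar (GE, 1)) (ncvar (GF, 0))) (ncmul (ncvar (GF, 0)) (ncvar (GE, 1)))))
            (ncvar (GKi, 1)))
         (ncmul (ncmul (ncconst ((q - inverse q)^2))
            (slot 0 (ncdiff (ncmul uK uF) (ncscale (inverse q ^ 2) (ncmul uF uK)))))
            (ncmul (ncvar (GE, 1)) (ncvar (GKi, 1))))"
  by (simp add: ncpoly_normalize Uq_sl2_defs casimir_split_def)
     (simp add: fun_eq_iff ncadd_def ncdiff_def ncscale_def ncmonom_def)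

lemma eqT_Delta_Casimir_casimir_split:
  "eqT 2 q (Delta (Casimir q))
     (ncsum (map (\<lambda>(\<alpha>, \<beta>). tens2 (evalL q \<alpha>) (evalR q \<beta>)) (casimir_split q)))"
  unfolding eqT_def Delta_Casimir_minus_casimir_split
  by (intro nc_ideal.add nc_ideal.mult nc_ideal.gen slot_commutator_in_rel_T
        slot_in_rel_T K_F_relation_in_rel_U)
     (simp_all add: ncfin_ncvar ncfin_ncscale ncfin_ncconst ncfin_ncmul)

lemma casimir_split_cotensor:
  fixes q :: "'k::field"
  assumes "q \<noteq> 0"
  shows "ncsum (map (\<lambda>(\<alpha>, \<beta>). tens_1_2 (evalL q \<alpha>) (tauR q \<beta>)) (casimir_split q))
       = ncsum (map (\<lambda>(\<alpha>, \<beta>). tens_2_1 (tauL q \<alpha>) (evalR q \<beta>)) (casimir_split q))"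
  using assms
  by (simp add: ncpoly_normalize Uq_sl2_defs casimir_split_def)
     (simp add: fun_eq_iff ncadd_def ncdiff_def ncscale_def ncmonom_def field_simps
        power2_eq_square power3_eq_cube)

theorem corollary2p5:
  fixes q :: "'k::field"
  assumes "q \<noteq> 0" and "\<forall>n::nat. n > 0 \<longrightarrow> q ^ n \<noteq> 1"
  shows "\<exists>ts :: ((genL, 'k) ncpoly \<times> (genR, 'k) ncpoly) list.
           (\<forall>(\<alpha>, \<beta>) \<in> set ts. ncfin \<alpha> \<and> ncfin \<beta>)
         \<and> eqT 2 q (Delta (Casimir q))
                  (ncsum (map (\<lambda>(\<alpha>, \<beta>). tens2 (evalL q \<alpha>) (evalR q \<beta>)) ts))
         \<and> eqT 3 q (ncsum (map (\<lambda>(\<alpha>, \<beta>). tens_1_2 (evalL q \<alpha>) (tauR q \<beta>)) ts))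
                  (ncsum (map (\<lambda>(\<alpha>, \<beta>). tens_2_1 (tauL q \<alpha>) (evalR q \<beta>)) ts))"
proof (intro exI conjI)
  show "\<forall>(\<alpha>, \<beta>) \<in> set (casimir_split q). ncfin \<alpha> \<and> ncfin \<beta>"
    by (rule ncfin_casimir_split)
  show "eqT 2 q (Delta (Casimir q))
          (ncsum (map (\<lambda>(\<alpha>, \<beta>). tens2 (evalL q \<alpha>) (evalR q \<beta>)) (casimir_split q)))"
    by (rule eqT_Delta_Casimir_casimir_split)
  show "eqT 3 q (ncsum (map (\<lambda>(\<alpha>, \<beta>). tens_1_2 (evalL q \<alpha>) (tauR q \<beta>)) (casimir_split q)))
          (ncsum (map (\<lambda>(\<alpha>, \<beta>). tens_2_1 (tauL q \<alpha>) (evalR q \<beta>)) (casimir_split q)))"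
    unfolding casimir_split_cotensor[OF \<open>q \<noteq> 0\<close>] by (rule eqT_refl)
qed

end
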